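(* Let $(G,\rho)$ and $(G',\rho')$ be ribbon graphs on the same two vertices $v,w$, each having $n$ edges (all joining $v$ and $w$). Let $\hat\gamma:\operatorname{Pic}^0(G)\to\operatorname{Pic}^0(G')$ be the isomorphism induced by the identity on $V_{gen}=\{v,w\}$ (sending the class of a configuration to the class of the configuration with the same number of chips on each vertex). Fix $\alpha\in\{\text{rotor routing},\text{Bernardi}\}$ and suppose there is a bijection $\varphi:\mathcal T(G)\to\mathcal T(G')$ such that for each $u\in\{v,w\}$, $\varphi(\alpha_u^{G}(S,T))=\alpha_u^{G'}(\hat\gamma(S),\varphi(T))$ for all $S\in\operatorname{Pic}^0(G)$, $T\in\mathcal T(G)$. Then $(G,\rho)$ and $(G',\rho')$ have the same genus.
   Context: Graphs are finite, connected, loopless, possibly with multiple edges; a two-vertex such graph with $n$ edges has $\operatorname{Pic}^0\cong\mathbb Z/n\mathbb Z$ and its spanning trees are the single edges. A ribbon graph assigns to each vertex $u$ a cyclic order $\rho_u$ on incident edges. $\operatorname{Pic}^0$ is degree-zero chip configurations modulo firings (firing $u$ sends one chip from $u$ along each incident edge); $\operatorname{Pic}^k$ likewise for degree $k$. Rotor routing torsor $r_u$: for $S\in\operatorname{Pic}^0$, $T\in\mathcal T$, take a representative of $S$ nonnegative away from $u$; orient $T$ towards $u$ giving each other vertex a rotor; while some vertex $x\neq u$ has positive chips, advance its rotor to the next edge of $\rho_x$ and send a chip along it; at the end the rotors form $r_u(S,T)$. Bernardi torsor $\beta_u$: using half-edges $(e,x)$, for $T$ start at $(e_0,u)$ with $e_0$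 a fixed edge at $u$; at $(e',x')$: if $e'\in T$ with other endpoint $y$, move to $(e'',y)$, $e''$ following $e'$ in $\rho_y$; if $e'\notin T$, move to $(\tilde e,x')$, $\tilde e$ following $e'$ in $\rho_{x'}$, placing a chip on $x'$ if the other half-edge of $e'$ was not yet visited; stop on return to $(e_0,u)$. This gives divisors $D_T$ of degree $|E|-|V|+1$ in bijection with $\operatorname{Pic}^{|E|-|V|+1}$, and $\beta_u(S,T)$ is the unique $T'$ with $[D_{T'}]=[D_T]+S$. Genus: a cycle is a closed walk which, entering $x$ along $e$, exits along the edge following $e$ in $\rho_x$; the genus $g$ satisfies $2g=2-|V|+|E|-\operatorname{cyc}$, with $\operatorname{cyc}$ the number of cycles. *)

theory Defs
  imports Complex_Main "HOL-Library.While_Combinator"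
begin

text \<open>The two vertices are Vv and Vw; the n edges
  (all joining Vv and Vw) are labelled 0, ..., n-1.  A ribbon structure assigns
  to each vertex x a cyclic order on the incident edges (= all edges), given by
  its successor function rho x.\<close>

datatype vtx = Vv | Vw

fun other :: "vtx \<Rightarrow> vtx" where
  "other Vv = Vw"
| "other Vw = Vv"

definition cyclic_order :: "nat \<Rightarrow> (nat \<Rightarrow> nat) \<Rightarrow> bool" where
  "cyclic_order n f \<longleftrightarrow> bij_betw f {..<n} {..<n} \<and>
     (\<forall>e\<in>{..<n}. \<forall>e'\<in>{..<n}. \<exists>k. (f ^^ k) e = e')"

text \<open>A connected two-vertex ribbon graph with n edges (connected: n >= 1).\<close>
definition ribbon2 :: "nat \<Rightarrow> (vtx \<Rightarrow> nat \<Rightarrow> nat) \<Rightarrow> bool" where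
  "ribbon2 n \<rho> \<longleftrightarrow> n \<ge> 1 \<and> (\<forall>x. cyclic_order n (\<rho> x))"

text \<open>Spanning trees are the single edges, so a tree is represented by its edge e < n.\<close>

type_synonym config = "vtx \<Rightarrow> int"

definition deg :: "config \<Rightarrow> int" where
  "deg D = D Vv + D Vw"

text \<open>Linear equivalence: D' is obtained from D by firing each vertex x
  a x times (firing x sends one chip along each of the n incident edges).\<close>
definition lin_equiv :: "nat \<Rightarrow> config \<Rightarrow> config \<Rightarrow> bool" where
  "lin_equiv n D D' \<longleftrightarrow>
     (\<exists>a :: vtx \<Rightarrow> int. \<forall>x. D' x = D x - a x * int n + a (other x) * int n)"

text \<open>Rotor routing torsor r_u(S,T), S given by a degree-0 representative D.\<close>
definition rotor_routing :: "nat \<Rightarrow> (vtx \<Rightarrow> nat \<Rightarrow> nat) \<Rightarrow> vtx \<Rightarrow> config \<Rightarrow> nat \<Rightarrow> nat" where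
  "rotor_routing n \<rho> u D T =
     (let x = other u;
          D0 = (SOME D'. lin_equiv n D D' \<and> D' x \<ge> 0)
      in snd (while (\<lambda>(C, r). C x > 0)
                    (\<lambda>(C, r). (let r' = \<rho> x r in (C(x := C x - 1, u := C u + 1), r')))
                    (D0, T)))"

text \<open>One step of Bernardi's tour for the tree T (single edge).
  State: current half-edge, set of visited half-edges, chips placed so far.\<close>
definition bstep :: "(vtx \<Rightarrow> nat \<Rightarrow> nat) \<Rightarrow> nat \<Rightarrow>
    (nat \<times> vtx) \<times> (nat \<times> vtx) set \<times> config \<Rightarrow> (nat \<times> vtx) \<times> (nat \<times> vtx) set \<times> config" where
  "bstep \<rho> T s =
     (case s of ((e', x'), vis, D) \<Rightarrow>
        if e' = T then
          (let y = other x'; h = (\<rho> y e', y) in (h, insert h vis, D))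
        else
          (let h = (\<rho> x' e', x') in
            (h, insert h vis, if (e', other x') \<notin> vis then D(x' := D x' + 1) else D)))"

definition bernardi_div :: "(vtx \<Rightarrow> nat \<Rightarrow> nat) \<Rightarrow> vtx \<Rightarrow> nat \<Rightarrow> nat \<Rightarrow> config" where
  "bernardi_div \<rho> u e0 T =
     (let s0 = ((e0, u), {(e0, u)}, (\<lambda>_. 0) :: config)
      in snd (snd (while (\<lambda>s. fst s \<noteq> (e0, u)) (bstep \<rho> T) (bstep \<rho> T s0))))"

definition bernardi :: "nat \<Rightarrow> (vtx \<Rightarrow> nat \<Rightarrow> nat) \<Rightarrow> vtx \<Rightarrow> nat \<Rightarrow> config \<Rightarrow> nat \<Rightarrow> nat" where
  "bernardi n \<rho> u e0 D T =
     (THE T'. T' < n \<and> lin_equiv n (bernardi_div \<rho> u e0 T') (\<lambda>x. bernardi_div \<rho> u e0 T x + D x))"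

text \<open>Cycles (faces): a state (e,x) means "entering x along e"; the walk then exits
  x along rho x e, entering the other vertex.\<close>
definition face_step :: "(vtx \<Rightarrow> nat \<Rightarrow> nat) \<Rightarrow> nat \<times> vtx \<Rightarrow> nat \<times> vtx" where
  "face_step \<rho> d = (case d of (e, x) \<Rightarrow> (\<rho> x e, other x))"

definition darts :: "nat \<Rightarrow> (nat \<times> vtx) set" where
  "darts n = {..<n} \<times> UNIV"

definition num_cycles :: "nat \<Rightarrow> (vtx \<Rightarrow> nat \<Rightarrow> nat) \<Rightarrow> nat" where
  "num_cycles n \<rho> = card (darts n //
     {(a, b). a \<in> darts n \<and> b \<in> darts n \<and> (\<exists>k. (face_step \<rho> ^^ k) a = b)})"

definition genus :: "nat \<Rightarrow> (vtx \<Rightarrow> nat \<Rightarrow> nat) \<Rightarrow> real" where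
  "genus n \<rho> = (2 - real (card (UNIV :: vtx set)) + real n - real (num_cycles n \<rho>)) / 2"

end

theory Submission
  imports Defs
begin

text \<open>With only two vertices both torsors can be computed explicitly.  Rotor routing from u
  with a degree-0 divisor D turns the tree edge D(x) mod n steps along the cyclic order at the
  other vertex x.  Bernardi's tour for the tree edge (\<rho> u)^k e0 runs k steps around u, crosses,
  runs once around the other vertex and returns, leaving k chips on u and n - 1 - k on the other
  vertex; hence \<beta> u turns the tree edge D(u) mod n steps along \<rho> u.  Feeding the divisor "one
  chip moved from the other vertex to x" into the compatibility of \<phi> thus gives
  \<phi> \<circ> \<rho> x = \<rho>' x \<circ> \<phi> at both vertices, so \<phi> \<times> id conjugates the face permutations of the two
  ribbon graphs; they have the same number of cycles and hence the same genus.\<close>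

lemma other_other [simp]: "other (other x) = x"
  by (cases x) auto

lemma other_neq [simp]: "other x \<noteq> x" "x \<noteq> other x"
  by (cases x; simp)+

lemma vtx_eq_or_other: "x = u \<or> x = other u"
  by (cases x; cases u) auto

subsection \<open>Cyclic orders\<close>

lemma cyclic_order_funpow_less:
  assumes "cyclic_order n f" and "e < n"
  shows "(f ^^ i) e < n"
  using assms by (induction i) (auto simp: cyclic_order_def bij_betw_def)

lemma cyclic_order_return_time_ge:
  assumes co: "cyclic_order n f" and e: "e < n" and ret: "(f ^^ d) e = e" and "0 < d"
  shows "n \<le> d"
proof -
  have "{..<n} \<subseteq> (\<lambda>i. (f ^^ i) e) ` {..<d}"
  proof
    fix e' assume "e' \<in> {..<n}"
    then obtain i where "(f ^^ i) e = e'"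
      using co e unfolding cyclic_order_def by auto
    then have "(f ^^ (i mod d)) e = e'"
      using funpow_mod_eq[OF ret] by simp
    then show "e' \<in> (\<lambda>i. (f ^^ i) e) ` {..<d}"
      using \<open>0 < d\<close> by auto
  qed
  then have "card {..<n} \<le> card ((\<lambda>i. (f ^^ i) e) ` {..<d})"
    by (intro card_mono) auto
  also have "\<dots> \<le> d"
    using card_image_le[of "{..<d}"] by simp
  finally show ?thesis by simp
qed

lemma cyclic_order_funpow_gap:
  assumes co: "cyclic_order n f" and e: "e < n" and "i < j" and eq: "(f ^^ i) e = (f ^^ j) e"
  shows "n \<le> j - i"
proof (rule cyclic_order_return_time_ge[OF co cyclic_order_funpow_less[OF co e]])
  have "(f ^^ (j - i)) ((f ^^ i) e) = (f ^^ (j - i + i)) e"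
    by (simp add: funpow_add)
  also have "\<dots> = (f ^^ i) e"
    using \<open>i < j\<close> eq by simp
  finally show "(f ^^ (j - i)) ((f ^^ i) e) = (f ^^ i) e" .
qed (use \<open>i < j\<close> in simp)

lemma cyclic_order_funpow_inj_on:
  assumes "cyclic_order n f" and "e < n"
  shows "inj_on (\<lambda>i. (f ^^ i) e) {..<n}"
proof (rule inj_onI)
  fix i j assume "i \<in> {..<n}" "j \<in> {..<n}" "(f ^^ i) e = (f ^^ j) e"
  then show "i = j"
    using cyclic_order_funpow_gap[OF assms, of i j] cyclic_order_funpow_gap[OF assms, of j i]
    by (cases i j rule: linorder_cases) auto
qed

lemma cyclic_order_funpow_period:
  assumes co: "cyclic_order n f" and e: "e < n"
  shows "(f ^^ n) e = e"
proof -
  have "\<not> inj_on (\<lambda>i. (f ^^ i) e) {..n}"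
  proof
    assume "inj_on (\<lambda>i. (f ^^ i) e) {..n}"
    then have "card {..n} \<le> card {..<n}"
      by (rule card_inj_on_le) (auto intro: cyclic_order_funpow_less[OF co e])
    then show False by simp
  qed
  then obtain i j where ij: "i < j" "j \<le> n" and eq: "(f ^^ i) e = (f ^^ j) e"
    unfolding inj_on_def by (metis atMost_iff linorder_neqE_nat)
  then have "n \<le> j - i"
    by (intro cyclic_order_funpow_gap[OF co e])
  then have "i = 0" "j = n"
    using ij by auto
  then show ?thesis
    using eq by simp
qed

lemma cyclic_order_funpow_mod:
  assumes "cyclic_order n f" and "e < n"
  shows "(f ^^ (m mod n)) e = (f ^^ m) e"
  using funpow_mod_eq cyclic_order_funpow_period[OF assms] by metis

lemma cyclic_order_funpow_image:
  assumes co: "cyclic_order n f" and e: "e < n"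
  shows "(\<lambda>i. (f ^^ i) e) ` {..<n} = {..<n}"
proof
  show "(\<lambda>i. (f ^^ i) e) ` {..<n} \<subseteq> {..<n}"
    using cyclic_order_funpow_less[OF co e] by auto
  show "{..<n} \<subseteq> (\<lambda>i. (f ^^ i) e) ` {..<n}"
  proof
    fix e' assume "e' \<in> {..<n}"
    then obtain i where "(f ^^ i) e = e'"
      using co e unfolding cyclic_order_def by auto
    moreover have "i mod n < n"
      using e by simp
    ultimately show "e' \<in> (\<lambda>i. (f ^^ i) e) ` {..<n}"
      using cyclic_order_funpow_mod[OF co e, of i] by (metis image_eqI lessThan_iff)
  qed
qed

lemma cyclic_order_funpow_int_mod:
  assumes "cyclic_order n f" and "e < n"
  shows "(f ^^ nat (int m mod int n)) e = (f ^^ m) e"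
  using cyclic_order_funpow_mod[OF assms] by (simp flip: of_nat_mod)

lemma ribbon2_cyclic_order: "ribbon2 n \<rho> \<Longrightarrow> cyclic_order n (\<rho> x)"
  unfolding ribbon2_def by auto

lemma ribbon2_less:
  assumes "ribbon2 n \<rho>" and "e < n"
  shows "\<rho> x e < n"
  using cyclic_order_funpow_less[OF ribbon2_cyclic_order[OF assms(1), of x] assms(2), of 1] by simp

subsection \<open>Linear equivalence on two vertices\<close>

lemma deg_eq: "deg D = D u + D (other u)"
  by (cases u) (simp_all add: deg_def)

lemma lin_equiv_iff:
  "lin_equiv n D D' \<longleftrightarrow> deg D' = deg D \<and> D' u mod int n = D u mod int n"
proof
  assume "lin_equiv n D D'"
  then obtain a where a: "\<And>x. D' x = D x - a x * int n + a (other x) * int n"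
    unfolding lin_equiv_def by blast
  have "D' u = D u + (a (other u) - a u) * int n"
    using a[of u] by (simp add: algebra_simps)
  moreover have "deg D' = deg D"
    using a[of Vv] a[of Vw] unfolding deg_def by simp
  ultimately show "deg D' = deg D \<and> D' u mod int n = D u mod int n"
    by simp
next
  assume "deg D' = deg D \<and> D' u mod int n = D u mod int n"
  then have deg: "D' u + D' (other u) = D u + D (other u)" and "int n dvd D' u - D u"
    by (simp_all add: deg_eq[of _ u] mod_eq_dvd_iff)
  then obtain t where t: "D' u = D u + t * int n"
    by (metis dvdE mult.commute diff_eq_eq add.commute)
  have firing: "D' x = D x - (if x = u then - t else 0) * int n + (if other x = u then - t else 0) * int n"
    for x using vtx_eq_or_other[of x u] deg t by auto
  show "lin_equiv n D D'"
    unfolding lin_equiv_def by (rule exI[of _ "\<lambda>x. if x = u then - t else 0"]) (use firing in blast)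
qed

subsection \<open>Rotor routing\<close>

lemma rotor_loop:
  assumes "x \<noteq> u" and "C x = int m"
  shows "snd (while (\<lambda>(C, r). C x > 0)
                    (\<lambda>(C, r). (let r' = \<rho> x r in (C(x := C x - 1, u := C u + 1), r')))
                    (C, r)) = (\<rho> x ^^ m) r"
  using assms(2)
proof (induction m arbitrary: C r)
  case 0
  then show ?case by (simp add: while_unfold)
next
  case (Suc m)
  let ?b = "\<lambda>(C, r). C x > 0"
  let ?c = "\<lambda>(C, r). (let r' = \<rho> x r in (C(x := C x - 1, u := C u + 1), r'))"
  let ?C = "C(x := C x - 1, u := C u + 1)"
  have "while ?b ?c (C, r) = while ?b ?c (?C, \<rho> x r)"
    using Suc.prems by (subst while_unfold) simp
  also have "snd \<dots> = (\<rho> x ^^ m) (\<rho> x r)"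
    by (rule Suc.IH) (use Suc.prems assms(1) in simp)
  also have "\<dots> = (\<rho> x ^^ Suc m) r"
    by (simp add: funpow_swap1)
  finally show ?case .
qed

lemma rotor_routing_eq:
  assumes ribbon: "ribbon2 n \<rho>" and T: "T < n"
  shows "rotor_routing n \<rho> u D T = (\<rho> (other u) ^^ nat (D (other u) mod int n)) T"
proof -
  let ?x = "other u"
  let ?P = "\<lambda>D'. lin_equiv n D D' \<and> D' ?x \<ge> 0"
  define D0 where "D0 = (SOME D'. ?P D')"
  have n: "n \<ge> 1" and co: "cyclic_order n (\<rho> ?x)"
    using ribbon unfolding ribbon2_def by auto
  \<comment> \<open>a representative nonnegative at ?x: move the chips at ?x, except their residue mod n, to u\<close>
  have "?P (D(?x := D ?x mod int n, u := D u + D ?x - D ?x mod int n))"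
    using n by (simp add: lin_equiv_iff[where u = ?x] deg_eq[of _ u])
  then have P: "?P D0"
    unfolding D0_def by (rule someI[where P = ?P])
  then have D0_mod: "D0 ?x mod int n = D ?x mod int n"
    by (simp add: lin_equiv_iff[where u = ?x])
  have "rotor_routing n \<rho> u D T = (\<rho> ?x ^^ nat (D0 ?x)) T"
    unfolding rotor_routing_def Let_def D0_def[symmetric]
    using rotor_loop[of ?x u D0 "nat (D0 ?x)"] P by simp
  also have "\<dots> = (\<rho> ?x ^^ (nat (D0 ?x) mod n)) T"
    by (rule cyclic_order_funpow_mod[OF co T, symmetric])
  also have "nat (D0 ?x) mod n = nat (D ?x mod int n)"
    using P D0_mod by (simp add: nat_mod_distrib flip: D0_mod)
  finally show ?thesis .
qed

subsection \<open>Bernardi's tour\<close>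

lemma bstep_tree_edge:
  "bstep \<rho> T ((T, x), vis, D) =
     ((\<rho> (other x) T, other x), insert (\<rho> (other x) T, other x) vis, D)"
  unfolding bstep_def by (simp add: Let_def)

lemma bstep_non_tree_edge:
  "e \<noteq> T \<Longrightarrow> bstep \<rho> T ((e, x), vis, D) =
     ((\<rho> x e, x), insert (\<rho> x e, x) vis, if (e, other x) \<notin> vis then D(x := D x + 1) else D)"
  unfolding bstep_def by (simp add: Let_def)

lemma card_Collect_less_Suc:
  "card {i. i < Suc m \<and> P i} = card {i. i < m \<and> P i} + (if P m then 1 else 0)"
proof -
  have "{i. i < Suc m \<and> P i} = {i. i < m \<and> P i} \<union> (if P m then {m} else {})"
    by (auto simp: less_Suc_eq)
  then show ?thesis by simp
qed

lemma bstep_run: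
  assumes "\<forall>i<m. (\<rho> x ^^ i) e \<noteq> T"
  shows "(bstep \<rho> T ^^ m) ((e, x), vis, D) =
    (((\<rho> x ^^ m) e, x), vis \<union> (\<lambda>i. ((\<rho> x ^^ i) e, x)) ` {1..m},
     D(x := D x + int (card {i. i < m \<and> ((\<rho> x ^^ i) e, other x) \<notin> vis})))"
  using assms
proof (induction m)
  case 0
  then show ?case by simp
next
  case (Suc m)
  let ?e = "(\<rho> x ^^ m) e"
  have "?e \<noteq> T"
    using Suc.prems by simp
  \<comment> \<open>the chip test looks at the other vertex, where the run visits nothing\<close>
  moreover have "(?e, other x) \<in> vis \<union> (\<lambda>i. ((\<rho> x ^^ i) e, x)) ` {1..m}
      \<longleftrightarrow> (?e, other x) \<in> vis"
    by auto
  moreover have "insert ((\<rho> x ^^ Suc m) e, x) (vis \<union> (\<lambda>i. ((\<rho> x ^^ i) e, x)) ` {1..m})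
      = vis \<union> (\<lambda>i. ((\<rho> x ^^ i) e, x)) ` {1..Suc m}"
    by (auto simp: atLeastAtMostSuc_conv)
  ultimately show ?case
    using Suc by (simp add: bstep_non_tree_edge card_Collect_less_Suc fun_eq_iff)
qed

lemma card_funpow_not_in:
  assumes co: "cyclic_order n g" and e: "e < n"
    and last: "(g ^^ (n - 1)) e \<in> E" and E: "E \<subseteq> {..<n}"
  shows "card {i. i < n - 1 \<and> (g ^^ i) e \<notin> E} = n - card E"
proof -
  let ?h = "\<lambda>i. (g ^^ i) e"
  let ?I = "{i. i < n - 1 \<and> ?h i \<notin> E}"
  have inj: "inj_on ?h {..<n}"
    by (rule cyclic_order_funpow_inj_on[OF co e])
  have "{..<n - 1} = {..<n} - {n - 1}"
    using e by auto
  then have "?h ` {..<n - 1} = {..<n} - {?h (n - 1)}"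
    using e by (simp add: inj_on_image_set_diff[OF inj] cyclic_order_funpow_image[OF co e])
  moreover have "?h ` ?I = ?h ` {..<n - 1} - E"
    by auto
  ultimately have "?h ` ?I = {..<n} - E"
    using last by auto
  moreover have "inj_on ?h ?I"
    by (rule inj_on_subset[OF inj]) auto
  ultimately have "card ?I = card ({..<n} - E)"
    using card_image by fastforce
  also have "\<dots> = n - card E"
    using E by (simp add: card_Diff_subset finite_subset)
  finally show ?thesis .
qed

lemma while_eq_funpow:
  assumes "\<forall>i<m. b ((c ^^ i) s)" and "\<not> b ((c ^^ m) s)"
  shows "while b c s = (c ^^ m) s"
proof -
  have "(LEAST k. \<not> b ((c ^^ k) s)) = m"
    by (rule Least_equality) (use assms not_less in blast)+
  then show ?thesis
    using assms(2) unfolding while_def while_option_def by auto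
qed

definition bernardi_tour :: "(vtx \<Rightarrow> nat \<Rightarrow> nat) \<Rightarrow> vtx \<Rightarrow> nat \<Rightarrow> nat \<Rightarrow> nat \<Rightarrow>
    (nat \<times> vtx) \<times> (nat \<times> vtx) set \<times> config" where
  "bernardi_tour \<rho> u e0 T i = (bstep \<rho> T ^^ i) ((e0, u), {(e0, u)}, \<lambda>_. 0)"

lemma bernardi_tour_add:
  "bernardi_tour \<rho> u e0 T (j + i) = (bstep \<rho> T ^^ j) (bernardi_tour \<rho> u e0 T i)"
  by (simp add: bernardi_tour_def funpow_add)

lemma bernardi_div_eq_tour:
  assumes "\<forall>i. 0 < i \<and> i < m \<longrightarrow> fst (bernardi_tour \<rho> u e0 T i) \<noteq> (e0, u)"
    and "fst (bernardi_tour \<rho> u e0 T m) = (e0, u)" and "0 < m"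
  shows "bernardi_div \<rho> u e0 T = snd (snd (bernardi_tour \<rho> u e0 T m))"
proof -
  let ?s0 = "((e0, u), {(e0, u)}, \<lambda>_. 0) :: (nat \<times> vtx) \<times> (nat \<times> vtx) set \<times> config"
  have tour: "(bstep \<rho> T ^^ i) (bstep \<rho> T ?s0) = bernardi_tour \<rho> u e0 T (Suc i)" for i
    by (simp only: bernardi_tour_def funpow_Suc_right comp_apply)
  have "while (\<lambda>s. fst s \<noteq> (e0, u)) (bstep \<rho> T) (bstep \<rho> T ?s0)
      = (bstep \<rho> T ^^ (m - 1)) (bstep \<rho> T ?s0)"
  proof (rule while_eq_funpow)
    show "\<forall>i<m - 1. fst ((bstep \<rho> T ^^ i) (bstep \<rho> T ?s0)) \<noteq> (e0, u)"
      unfolding tour using assms(1) by (simp add: less_diff_conv)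
    show "\<not> fst ((bstep \<rho> T ^^ (m - 1)) (bstep \<rho> T ?s0)) \<noteq> (e0, u)"
      unfolding tour using assms(2,3) by simp
  qed
  then show ?thesis
    unfolding bernardi_div_def Let_def tour using \<open>0 < m\<close> by simp
qed

context
  fixes n :: nat and \<rho> :: "vtx \<Rightarrow> nat \<Rightarrow> nat" and u :: vtx and e0 k :: nat
  assumes ribbon: "ribbon2 n \<rho>" and e0: "e0 < n" and k: "k < n"
begin

private lemma cyclic_order_rotation: "cyclic_order n (\<rho> x)"
  by (rule ribbon2_cyclic_order[OF ribbon])

private lemma tree_edge_less: "(\<rho> u ^^ k) e0 < n"
  by (rule cyclic_order_funpow_less[OF cyclic_order_rotation e0])

private lemma funpow_start_eq_iff:
  "i < n \<Longrightarrow> j < n \<Longrightarrow> (\<rho> u ^^ i) e0 = (\<rho> u ^^ j) e0 \<longleftrightarrow> i = j"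
  using inj_onD[OF cyclic_order_funpow_inj_on[OF cyclic_order_rotation e0]] by blast

lemma bernardi_tour_around_u:
  assumes "i \<le> k"
  shows "bernardi_tour \<rho> u e0 ((\<rho> u ^^ k) e0) i =
    (((\<rho> u ^^ i) e0, u), (\<lambda>j. ((\<rho> u ^^ j) e0, u)) ` {..i}, (\<lambda>_. 0)(u := int i))"
proof -
  have "\<forall>j<i. (\<rho> u ^^ j) e0 \<noteq> (\<rho> u ^^ k) e0"
    using assms k funpow_start_eq_iff by auto
  moreover have "{..i} = insert 0 {1..i}"
    by auto
  ultimately show ?thesis
    unfolding bernardi_tour_def by (simp add: bstep_run)
qed

lemma bernardi_tour_around_other:
  assumes "j < n"
  shows "bernardi_tour \<rho> u e0 ((\<rho> u ^^ k) e0) (j + Suc k) =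
    (((\<rho> (other u) ^^ j) (\<rho> (other u) ((\<rho> u ^^ k) e0)), other u),
     (\<lambda>i. ((\<rho> u ^^ i) e0, u)) ` {..k}
       \<union> (\<lambda>i. ((\<rho> (other u) ^^ i) (\<rho> (other u) ((\<rho> u ^^ k) e0)), other u)) ` {..j},
     (\<lambda>_. 0)(u := int k, other u := int (card {i. i < j \<and>
        (\<rho> (other u) ^^ i) (\<rho> (other u) ((\<rho> u ^^ k) e0)) \<notin> (\<lambda>i. (\<rho> u ^^ i) e0) ` {..k}})))"
proof -
  let ?T = "(\<rho> u ^^ k) e0" and ?g = "\<rho> (other u)"
  let ?V = "(\<lambda>i. ((\<rho> u ^^ i) e0, u)) ` {..k}"
  have crossed: "bernardi_tour \<rho> u e0 ?T (Suc k) =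
      ((?g ?T, other u), insert (?g ?T, other u) ?V, (\<lambda>_. 0)(u := int k))"
    using bernardi_tour_add[where j = 1 and i = k] by (simp add: bernardi_tour_around_u bstep_tree_edge)
  have "(?g ^^ i) (?g ?T) \<noteq> ?T" if "i < j" for i
  proof -
    have "(?g ^^ Suc i) ?T \<noteq> (?g ^^ 0) ?T"
      using inj_onD[OF cyclic_order_funpow_inj_on[OF cyclic_order_rotation[of "other u"] tree_edge_less], of "Suc i" 0]
        that assms by auto
    then show ?thesis
      by (simp add: funpow_swap1)
  qed
  moreover have "(y, u) \<in> insert (?g ?T, other u) ?V \<longleftrightarrow> y \<in> (\<lambda>i. (\<rho> u ^^ i) e0) ` {..k}" for y
    by auto
  moreover have "{..j} = insert 0 {1..j}"
    by auto
  ultimately show ?thesis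
    using bernardi_tour_add[where j = j and i = "Suc k"] by (simp add: crossed bstep_run)
qed

lemma bernardi_tour_after_other:
  obtains V where "bernardi_tour \<rho> u e0 ((\<rho> u ^^ k) e0) (n - 1 + Suc k) =
      (((\<rho> u ^^ k) e0, other u), V, (\<lambda>_. 0)(u := int k, other u := int (n - 1 - k)))"
    and "{..<n} \<times> {other u} \<subseteq> V"
proof -
  let ?T = "(\<rho> u ^^ k) e0" and ?g = "\<rho> (other u)"
  let ?E = "(\<lambda>i. (\<rho> u ^^ i) e0) ` {..k}"
  have cg: "cyclic_order n ?g" and gT: "?g ?T < n"
    using cyclic_order_rotation cyclic_order_funpow_less[OF _ tree_edge_less, of _ 1] by auto
  have closes: "(?g ^^ (n - 1)) (?g ?T) = ?T"
    using cyclic_order_funpow_period[OF cg tree_edge_less] k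
    by (metis Suc_diff_1 funpow_Suc_right comp_apply gr_implies_not0 not_gr0)
  have "card ?E = Suc k"
    using k by (subst card_image)
      (auto intro: inj_on_subset[OF cyclic_order_funpow_inj_on[OF cyclic_order_rotation e0]])
  moreover have "?E \<subseteq> {..<n}"
    using cyclic_order_funpow_less[OF cyclic_order_rotation e0] by auto
  ultimately have chips: "card {i. i < n - 1 \<and> (?g ^^ i) (?g ?T) \<notin> ?E} = n - 1 - k"
    using card_funpow_not_in[OF cg gT] closes by auto
  have "{..<n} \<times> {other u} = (\<lambda>i. ((?g ^^ i) (?g ?T), other u)) ` {..<n}"
    using cyclic_order_funpow_image[OF cg gT] by auto
  also have "\<dots> \<subseteq> (\<lambda>i. ((?g ^^ i) (?g ?T), other u)) ` {..n - 1}"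
    by auto
  finally show ?thesis
    using that bernardi_tour_around_other[of "n - 1"] k closes chips by auto
qed

lemma bernardi_tour_back_around_u:
  assumes "j < n - k"
  shows "fst (bernardi_tour \<rho> u e0 ((\<rho> u ^^ k) e0) (j + Suc (n - 1 + Suc k))) =
      ((\<rho> u ^^ (j + Suc k)) e0, u)"
    and "snd (snd (bernardi_tour \<rho> u e0 ((\<rho> u ^^ k) e0) (j + Suc (n - 1 + Suc k)))) =
      (\<lambda>_. 0)(u := int k, other u := int (n - 1 - k))"
proof -
  let ?T = "(\<rho> u ^^ k) e0" and ?f = "\<rho> u"
  obtain V where half: "bernardi_tour \<rho> u e0 ?T (n - 1 + Suc k) =
      ((?T, other u), V, (\<lambda>_. 0)(u := int k, other u := int (n - 1 - k)))"
    and V: "{..<n} \<times> {other u} \<subseteq> V"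
    by (rule bernardi_tour_after_other)
  have shift: "(?f ^^ i) (?f ?T) = (?f ^^ (i + Suc k)) e0" for i
    by (simp add: funpow_add funpow_swap1)
  have "(?f ^^ (i + Suc k)) e0 \<noteq> ?T" if "i < j" for i
    using funpow_start_eq_iff[of "i + Suc k" k] that assms k by auto
  then have "\<forall>i<j. (?f ^^ i) (?f ?T) \<noteq> ?T"
    by (simp add: shift)
  moreover have "(?f ^^ i) (?f ?T) < n" for i
    using cyclic_order_funpow_less[OF cyclic_order_rotation[of u] tree_edge_less, of "Suc i"]
    by (simp add: funpow_swap1)
  then have "card {i. i < j \<and> ((?f ^^ i) (?f ?T), other u) \<notin> insert (?f ?T, u) V} = 0"
    using V by auto
  ultimately have "(bstep \<rho> ?T ^^ j) ((?f ?T, u), insert (?f ?T, u) V,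
        (\<lambda>_. 0)(u := int k, other u := int (n - 1 - k))) =
      (((?f ^^ j) (?f ?T), u), insert (?f ?T, u) V \<union> (\<lambda>i. ((?f ^^ i) (?f ?T), u)) ` {1..j},
       (\<lambda>_. 0)(u := int k, other u := int (n - 1 - k)))"
    by (simp add: bstep_run fun_eq_iff)
  moreover have "bernardi_tour \<rho> u e0 ?T (Suc (n - 1 + Suc k)) = ((?f ?T, u), insert (?f ?T, u) V,
        (\<lambda>_. 0)(u := int k, other u := int (n - 1 - k)))"
    using bernardi_tour_add[where j = 1 and i = "n - 1 + Suc k"] half by (simp add: bstep_tree_edge)
  ultimately have "bernardi_tour \<rho> u e0 ?T (j + Suc (n - 1 + Suc k)) =
      (((?f ^^ j) (?f ?T), u), insert (?f ?T, u) V \<union> (\<lambda>i. ((?f ^^ i) (?f ?T), u)) ` {1..j},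
       (\<lambda>_. 0)(u := int k, other u := int (n - 1 - k)))"
    by (simp only: bernardi_tour_add)
  then show "fst (bernardi_tour \<rho> u e0 ?T (j + Suc (n - 1 + Suc k))) = ((?f ^^ (j + Suc k)) e0, u)"
    and "snd (snd (bernardi_tour \<rho> u e0 ?T (j + Suc (n - 1 + Suc k)))) =
      (\<lambda>_. 0)(u := int k, other u := int (n - 1 - k))"
    by (simp_all add: shift)
qed

lemma bernardi_div_funpow:
  "bernardi_div \<rho> u e0 ((\<rho> u ^^ k) e0) = (\<lambda>_. 0)(u := int k, other u := int (n - 1 - k))"
proof -
  let ?T = "(\<rho> u ^^ k) e0"
  let ?last = "n - 1 - k + Suc (n - 1 + Suc k)"
  have last: "?last = 2 * n"
    using k by simp
  have "fst (bernardi_tour \<rho> u e0 ?T i) \<noteq> (e0, u)" if "0 < i" "i < 2 * n" for i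
  proof -
    consider (around_u) "i \<le> k"
      | (around_other) j where "j < n" "i = j + Suc k"
      | (back_around_u) j where "j < n - 1 - k" "i = j + Suc (n - 1 + Suc k)"
    proof (cases "i \<le> k")
      case False
      then show thesis
        using that(2-3)[of "i - Suc k"] that(3)[of "i - Suc (n - 1 + Suc k)"] \<open>i < 2 * n\<close>
        by (cases "i \<le> n - 1 + Suc k") auto
    qed
    then show ?thesis
    proof cases
      case around_u
      then show ?thesis
        using funpow_start_eq_iff[of i 0] that k by (simp add: bernardi_tour_around_u)
    next
      case (around_other j)
      then show ?thesis
        using bernardi_tour_around_other[of j] by simp
    next
      case (back_around_u j)
      then show ?thesis
        using bernardi_tour_back_around_u(1)[of j] funpow_start_eq_iff[of "j + Suc k" 0] by auto
    qed
  qed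
  moreover have "fst (bernardi_tour \<rho> u e0 ?T ?last) = (e0, u)"
    using bernardi_tour_back_around_u(1)[of "n - 1 - k"] k
      cyclic_order_funpow_period[OF cyclic_order_rotation e0]
    by (simp add: Suc_diff_Suc)
  moreover have "snd (snd (bernardi_tour \<rho> u e0 ?T ?last)) =
      (\<lambda>_. 0)(u := int k, other u := int (n - 1 - k))"
    using bernardi_tour_back_around_u(2)[of "n - 1 - k"] k by simp
  ultimately show ?thesis
    using bernardi_div_eq_tour[of ?last] last by simp
qed

end

lemma deg_chip_split:
  "k < n \<Longrightarrow> deg ((\<lambda>_. 0)(u := int k, other u := int (n - 1 - k))) = int n - 1"
  by (simp add: deg_eq[of _ u])

lemma bernardi_eq:
  assumes ribbon: "ribbon2 n \<rho>" and e0: "e0 < n" and T: "T < n" and deg: "deg D = 0"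
  shows "bernardi n \<rho> u e0 D T = (\<rho> u ^^ nat (D u mod int n)) T"
proof -
  have co: "cyclic_order n (\<rho> u)"
    by (rule ribbon2_cyclic_order[OF ribbon])
  have "T \<in> (\<lambda>i. (\<rho> u ^^ i) e0) ` {..<n}"
    using cyclic_order_funpow_image[OF co e0] T by simp
  then obtain k where k: "k < n" and T_eq: "T = (\<rho> u ^^ k) e0"
    by auto
  define m where "m = nat ((int k + D u) mod int n)"
  have m: "m < n" "int m = (int k + D u) mod int n"
    using k by (simp_all add: m_def nat_less_iff)
  let ?P = "\<lambda>T'. T' < n \<and> lin_equiv n (bernardi_div \<rho> u e0 T') (\<lambda>x. bernardi_div \<rho> u e0 T x + D x)"
  have "?P T' \<longleftrightarrow> T' = (\<rho> u ^^ m) e0" for T'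
  proof
    assume T': "?P T'"
    then have "T' \<in> (\<lambda>i. (\<rho> u ^^ i) e0) ` {..<n}"
      using cyclic_order_funpow_image[OF co e0] by simp
    then obtain k' where k': "k' < n" "T' = (\<rho> u ^^ k') e0"
      by auto
    then have "int k' = (int k + D u) mod int n"
      using T' k by (simp add: T_eq bernardi_div_funpow[OF ribbon e0] lin_equiv_iff[where u = u])
    then have "int k' = int m"
      using m(2) by simp
    then show "T' = (\<rho> u ^^ m) e0"
      using k' by simp
  next
    assume "T' = (\<rho> u ^^ m) e0"
    moreover have "deg (\<lambda>x. bernardi_div \<rho> u e0 T x + D x) = int n - 1"
      using deg deg_chip_split[OF k, of u]
      by (simp add: T_eq bernardi_div_funpow[OF ribbon e0 k] deg_def)
    ultimately show "?P T'"
      using k m deg_chip_split[OF m(1), of u] cyclic_order_funpow_less[OF co e0]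
      by (simp add: T_eq bernardi_div_funpow[OF ribbon e0] lin_equiv_iff[where u = u])
  qed
  then have "bernardi n \<rho> u e0 D T = (\<rho> u ^^ m) e0"
    unfolding bernardi_def by (simp only: the_eq_trivial)
  also have "\<dots> = (\<rho> u ^^ (nat (D u mod int n) + k)) e0"
  proof -
    have "int (nat (D u mod int n) + k) mod int n = (int k + D u) mod int n"
      using k by (simp add: mod_add_right_eq add.commute)
    then show ?thesis
      using cyclic_order_funpow_int_mod[OF co e0, of "nat (D u mod int n) + k"] by (simp add: m_def)
  qed
  also have "\<dots> = (\<rho> u ^^ nat (D u mod int n)) T"
    by (simp add: T_eq funpow_add)
  finally show ?thesis .
qed

definition dipole :: "vtx \<Rightarrow> config" where
  "dipole x = (\<lambda>z. if z = x then 1 else -1)"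

lemma deg_dipole: "deg (dipole x) = 0"
  by (cases x) (simp_all add: deg_def dipole_def)

lemma cyclic_order_funpow_one_mod:
  "cyclic_order n f \<Longrightarrow> e < n \<Longrightarrow> (f ^^ nat (1 mod int n)) e = f e"
  using cyclic_order_funpow_int_mod[of n f e 1] by simp

lemma rotor_routing_dipole:
  assumes "ribbon2 n \<rho>" and "T < n"
  shows "rotor_routing n \<rho> (other x) (dipole x) T = \<rho> x T"
proof -
  have "rotor_routing n \<rho> (other x) (dipole x) T = (\<rho> x ^^ nat (dipole x x mod int n)) T"
    using rotor_routing_eq[OF assms] by simp
  then show ?thesis
    using assms by (simp add: dipole_def cyclic_order_funpow_one_mod ribbon2_cyclic_order)
qed

lemma bernardi_dipole:
  assumes "ribbon2 n \<rho>" and "e0 < n" and "T < n"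
  shows "bernardi n \<rho> x e0 (dipole x) T = \<rho> x T"
proof -
  have "bernardi n \<rho> x e0 (dipole x) T = (\<rho> x ^^ nat (dipole x x mod int n)) T"
    by (rule bernardi_eq[OF assms deg_dipole])
  then show ?thesis
    using assms by (simp add: dipole_def cyclic_order_funpow_one_mod ribbon2_cyclic_order)
qed

lemma rotor_routing_compat_commute:
  assumes "ribbon2 n \<rho>" and "ribbon2 n \<rho>'" and bij: "bij_betw \<phi> {..<n} {..<n}"
    and compat: "\<forall>u D T. deg D = 0 \<longrightarrow> T < n \<longrightarrow>
      \<phi> (rotor_routing n \<rho> u D T) = rotor_routing n \<rho>' u D (\<phi> T)"
    and e: "e < n"
  shows "\<phi> (\<rho> x e) = \<rho>' x (\<phi> e)"
proof -
  have "\<phi> (rotor_routing n \<rho> (other x) (dipole x) e)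
      = rotor_routing n \<rho>' (other x) (dipole x) (\<phi> e)"
    using compat e deg_dipole by blast
  moreover have "\<phi> e < n"
    using bij e by (auto simp: bij_betw_def)
  ultimately show ?thesis
    using assms e by (simp add: rotor_routing_dipole)
qed

lemma bernardi_compat_commute:
  assumes "ribbon2 n \<rho>" and "ribbon2 n \<rho>'" and bij: "bij_betw \<phi> {..<n} {..<n}"
    and "e0 < n" and "e0' < n"
    and compat: "\<forall>D T. deg D = 0 \<longrightarrow> T < n \<longrightarrow>
      \<phi> (bernardi n \<rho> x e0 D T) = bernardi n \<rho>' x e0' D (\<phi> T)"
    and e: "e < n"
  shows "\<phi> (\<rho> x e) = \<rho>' x (\<phi> e)"
proof -
  have "\<phi> (bernardi n \<rho> x e0 (dipole x) e) = bernardi n \<rho>' x e0' (dipole x) (\<phi> e)"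
    using compat e deg_dipole by blast
  moreover have "\<phi> e < n"
    using bij e by (auto simp: bij_betw_def)
  ultimately show ?thesis
    using assms e by (simp add: bernardi_dipole)
qed

subsection \<open>Face cycles\<close>

lemma card_quotient_bij_betw:
  assumes bij: "bij_betw h A B" and R: "R \<subseteq> A \<times> A" and S: "S \<subseteq> B \<times> B"
    and rel: "\<And>a b. a \<in> A \<Longrightarrow> b \<in> A \<Longrightarrow> (h a, h b) \<in> S \<longleftrightarrow> (a, b) \<in> R"
  shows "card (B // S) = card (A // R)"
proof -
  have B: "B = h ` A"
    using bij by (simp add: bij_betw_def)
  have image_class: "S `` {h a} = h ` (R `` {a})" if "a \<in> A" for a
  proof
    show "S `` {h a} \<subseteq> h ` (R `` {a})"
      using S rel[OF that] unfolding B by auto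
    show "h ` (R `` {a}) \<subseteq> S `` {h a}"
      using R rel[OF that] by auto
  qed
  have "B // S = image h ` (A // R)"
    unfolding quotient_def B using image_class by auto
  moreover have "inj_on (image h) (A // R)"
    by (rule inj_on_subset[OF inj_on_image_Pow[OF bij_betw_imp_inj_on[OF bij]]])
      (use R in \<open>auto elim!: quotientE\<close>)
  ultimately show ?thesis
    by (simp add: card_image)
qed

lemma num_cycles_conj:
  assumes bij: "bij_betw \<phi> {..<n} {..<n}" and closed: "\<And>x e. e < n \<Longrightarrow> \<rho> x e < n"
    and comm: "\<And>x e. e < n \<Longrightarrow> \<phi> (\<rho> x e) = \<rho>' x (\<phi> e)"
  shows "num_cycles n \<rho> = num_cycles n \<rho>'"
proof -
  define \<Phi> where "\<Phi> = (\<lambda>(e, x :: vtx). (\<phi> e, x))"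
  have bij_darts: "bij_betw \<Phi> (darts n) (darts n)"
    unfolding \<Phi>_def darts_def using bij_betw_map_prod[OF bij bij_betw_id[of UNIV]]
    by (simp add: map_prod_def id_def)
  have iter: "(face_step \<rho>' ^^ k) (\<Phi> a) = \<Phi> ((face_step \<rho> ^^ k) a)
      \<and> (face_step \<rho> ^^ k) a \<in> darts n"
    if "a \<in> darts n" for a k
    using that by (induction k) (auto simp: face_step_def \<Phi>_def darts_def closed comm)
  show ?thesis
    unfolding num_cycles_def
  proof (rule card_quotient_bij_betw[OF bij_darts, symmetric])
    fix a b assume a: "a \<in> darts n" and b: "b \<in> darts n"
    have "(face_step \<rho>' ^^ k) (\<Phi> a) = \<Phi> b \<longleftrightarrow> (face_step \<rho> ^^ k) a = b" for k
      using iter[OF a, of k] b bij_betw_imp_inj_on[OF bij_darts] by (auto dest: inj_onD)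
    then show "(\<Phi> a, \<Phi> b)
        \<in> {(a, b). a \<in> darts n \<and> b \<in> darts n \<and> (\<exists>k. (face_step \<rho>' ^^ k) a = b)}
      \<longleftrightarrow> (a, b)
        \<in> {(a, b). a \<in> darts n \<and> b \<in> darts n \<and> (\<exists>k. (face_step \<rho> ^^ k) a = b)}"
      using a b bij_betw_apply[OF bij_darts] by auto
  qed auto
qed

theorem proposition3p6:
  fixes n :: nat and \<rho> \<rho>' :: "vtx \<Rightarrow> nat \<Rightarrow> nat" and \<phi> :: "nat \<Rightarrow> nat"
    and b b' :: "vtx \<Rightarrow> nat"
  assumes "ribbon2 n \<rho>" and "ribbon2 n \<rho>'"
    and "\<forall>u. b u < n" and "\<forall>u. b' u < n"
    and "bij_betw \<phi> {..<n} {..<n}"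
    and "(\<forall>u D T. deg D = 0 \<longrightarrow> T < n \<longrightarrow>
            \<phi> (rotor_routing n \<rho> u D T) = rotor_routing n \<rho>' u D (\<phi> T))
       \<or> (\<forall>u D T. deg D = 0 \<longrightarrow> T < n \<longrightarrow>
            \<phi> (bernardi n \<rho> u (b u) D T) = bernardi n \<rho>' u (b' u) D (\<phi> T))"
  shows "genus n \<rho> = genus n \<rho>'"
proof -
  have "\<phi> (\<rho> x e) = \<rho>' x (\<phi> e)" if "e < n" for x e
    using assms(6)
  proof
    assume "\<forall>u D T. deg D = 0 \<longrightarrow> T < n \<longrightarrow>
        \<phi> (rotor_routing n \<rho> u D T) = rotor_routing n \<rho>' u D (\<phi> T)"
    then show ?thesis
      using rotor_routing_compat_commute[OF assms(1,2,5)] that by blast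
  next
    assume "\<forall>u D T. deg D = 0 \<longrightarrow> T < n \<longrightarrow>
        \<phi> (bernardi n \<rho> u (b u) D T) = bernardi n \<rho>' u (b' u) D (\<phi> T)"
    then show ?thesis
      using bernardi_compat_commute[OF assms(1,2,5)] assms(3,4) that by blast
  qed
  then have "num_cycles n \<rho> = num_cycles n \<rho>'"
    using num_cycles_conj[OF assms(5)] ribbon2_less[OF assms(1)] by blast
  then show ?thesis
    unfolding genus_def by simp
qed

end
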